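(* Let $d\ge2$, $n\ge d+1$, $p\ge2$ a prime, $\Lambda\in X_{n,d}$, $M=M^p_n(\Lambda)$ with group $H_0\cong\mathbb{Z}_p^n$. If $K<H_0$ is a subgroup isomorphic to $\mathbb{Z}_p^{n-r}$ (for some integer $r\ge0$) acting freely on $M$ (i.e. no non-trivial element of $K$ has a fixed point on $M$), then $n+1\le (p^r-1)/(p-1)$. In particular no such $K$ exists with $r=1$, and for $p=2$ none exists with $r=2$.
   Context: For $q=[\rho_1:\cdots:\rho_{d+1}]\in\mathbb{P}^d$ let $L_q=\{\rho_1t_1+\cdots+\rho_{d+1}t_{d+1}=0\}$. Hyperplanes are in general position if any $\min\{N,d+1\}$ of their $N$ coefficient vectors are linearly independent. Let $e_1,\dots,e_{d+1}$ be the coordinate points of $\mathbb{P}^d$ and $e_{d+2}=[1:\cdots:1]$. For $\Lambda=(\lambda_{i,j})_{1\le i\le n-d-1,\,1\le j\le d}\in\mathbb{C}^{d(n-d-1)}$ put $L_j(\Lambda)=L_{e_j}$ ($1\le j\le d+2$) and $L_j(\Lambda)=L_{[\lambda_{j-d-2,1}:\cdots:\lambda_{j-d-2,d}:1]}$ ($d+3\le j\le n+1$); $X_{n,d}$ is the set of $\Lambda$ for which $L_1(\Lambda),\dots,L_{n+1}(\Lambda)$ are in general position. For $\Lambda\in X_{n,d}$, setting $\lambda_{0,j}=1$, $M^k_n(\Lambda)\subset\mathbb{P}^n$ is the common zero set of $\lambda_{i,1}x_1^k+\cdots+\lambda_{i,d}x_d^k+x_{d+1}^k+x_{d+2+i}^k$,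 $i=0,\dots,n-d-1$. $H_0=\langle\varphi_1,\dots,\varphi_{n+1}\rangle$, where $\varphi_j$ multiplies the $j$-th homogeneous coordinate by $e^{2\pi\sqrt{-1}/k}$. *)

theory Defs
  imports Complex_Main "HOL-Algebra.Algebra"
begin

(* Homogeneous coordinate vectors of P^n: functions nat => complex, coordinates 1..n+1,
   zero outside. A point of P^n is the class of a nonzero vector under nonzero scaling. *)

definition proj_class :: "(nat \<Rightarrow> complex) \<Rightarrow> (nat \<Rightarrow> complex) set" where
  "proj_class x = {(\<lambda>j. c * x j) | c. c \<noteq> 0}"

definition proj_space :: "nat \<Rightarrow> (nat \<Rightarrow> complex) set set" where
  "proj_space n = {proj_class x | x. (\<forall>j. j \<notin> {1..n+1} \<longrightarrow> x j = 0) \<and> (\<exists>j\<in>{1..n+1}. x j \<noteq> 0)}"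

definition zeta :: "nat \<Rightarrow> complex" where
  "zeta k = cis (2 * pi / real k)"

definition phi :: "nat \<Rightarrow> nat \<Rightarrow> nat \<Rightarrow> (nat \<Rightarrow> complex) set \<Rightarrow> (nat \<Rightarrow> complex) set" where
  "phi k n j = (\<lambda>P \<in> proj_space n. (\<lambda>x. (\<lambda>i. if i = j then zeta k * x i else x i)) ` P)"

definition H0 :: "nat \<Rightarrow> nat \<Rightarrow> ((nat \<Rightarrow> complex) set \<Rightarrow> (nat \<Rightarrow> complex) set) set" where
  "H0 k n = generate (BijGroup (proj_space n)) {phi k n j | j. j \<in> {1..n+1}}"

(* coefficient vector (in C^{d+1}, coordinates 1..d+1) of the hyperplane L_j(Lambda) *)
definition coeffvec :: "nat \<Rightarrow> (nat \<Rightarrow> nat \<Rightarrow> complex) \<Rightarrow> nat \<Rightarrow> nat \<Rightarrow> complex" where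
  "coeffvec d Lam j =
     (if j \<le> d + 1 then (\<lambda>t. if t = j then 1 else 0)
      else if j = d + 2 then (\<lambda>t. 1)
      else (\<lambda>t. if t \<le> d then Lam (j - d - 2) t else 1))"

definition lin_indep_family :: "nat \<Rightarrow> (nat \<Rightarrow> nat \<Rightarrow> complex) \<Rightarrow> nat set \<Rightarrow> bool" where
  "lin_indep_family d v S \<longleftrightarrow>
     (\<forall>c. (\<forall>t\<in>{1..d+1}. (\<Sum>j\<in>S. c j * v j t) = 0) \<longrightarrow> (\<forall>j\<in>S. c j = 0))"

definition general_position :: "nat \<Rightarrow> nat \<Rightarrow> (nat \<Rightarrow> nat \<Rightarrow> complex) \<Rightarrow> bool" where
  "general_position d N v \<longleftrightarrow>
     (\<forall>S. S \<subseteq> {1..N} \<and> card S = min N (d + 1) \<longrightarrow> lin_indep_family d v S)"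

(* X_{n,d}: Lambda = (lambda_{i,j}), 1<=i<=n-d-1, 1<=j<=d, represented as nat => nat => complex
   (values outside this index range are irrelevant) *)
definition X_nd :: "nat \<Rightarrow> nat \<Rightarrow> (nat \<Rightarrow> nat \<Rightarrow> complex) set" where
  "X_nd n d = {Lam. general_position d (n + 1) (coeffvec d Lam)}"

definition lam_ext :: "(nat \<Rightarrow> nat \<Rightarrow> complex) \<Rightarrow> nat \<Rightarrow> nat \<Rightarrow> complex" where
  "lam_ext Lam i j = (if i = 0 then 1 else Lam i j)"

definition fermat_poly :: "nat \<Rightarrow> nat \<Rightarrow> (nat \<Rightarrow> nat \<Rightarrow> complex) \<Rightarrow> nat \<Rightarrow> (nat \<Rightarrow> complex) \<Rightarrow> complex" where
  "fermat_poly k d Lam i x =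
     (\<Sum>j\<in>{1..d}. lam_ext Lam i j * x j ^ k) + x (d + 1) ^ k + x (d + 2 + i) ^ k"

definition M_var :: "nat \<Rightarrow> nat \<Rightarrow> nat \<Rightarrow> (nat \<Rightarrow> nat \<Rightarrow> complex) \<Rightarrow> (nat \<Rightarrow> complex) set set" where
  "M_var k n d Lam = {P \<in> proj_space n. \<forall>x\<in>P. \<forall>i\<in>{0..n-d-1}. fermat_poly k d Lam i x = 0}"

end

theory Submission
  imports Defs
begin

text \<open>
  Every element of H0 acts diagonally, multiplying the homogeneous coordinate x(k) by a power
  \<zeta>^a(k); as the exponents only matter modulo p and up to a common shift, there are at most p^n
  such maps. A diagonal map that moves only the coordinates x(i) and x(j) fixes every point of M on
  the plane x(i) = x(j) = 0, and M meets every such plane. Hence if K acts freely on M, it contains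
  neither the map u(i,a) scaling x(i) alone by \<zeta>^a (0 < a < p) nor any u(j,b)^-1 u(i,a) with
  (i,a) \<noteq> (j,b). So K and its (n+1)(p-1) translates u(i,a) K are pairwise disjoint, and counting
  gives ((n+1)(p-1)+1) p^(n-r) \<le> p^n.
\<close>

lemma zeta_pow: "zeta p ^ m = cis (2 * pi * real m / real p)"
  by (simp add: zeta_def DeMoivre mult_ac)

lemma zeta_pow_nonzero: "zeta p ^ m \<noteq> 0"
  by (simp add: zeta_def cis_neq_zero)

lemma zeta_pow_mult_self: "p > 0 \<Longrightarrow> zeta p ^ (p * q) = 1"
  by (simp add: power_mult zeta_pow)

lemma zeta_pow_mod: "p > 0 \<Longrightarrow> zeta p ^ m = zeta p ^ (m mod p)"
  by (metis div_mult_mod_eq mult.commute mult_1 power_add zeta_pow_mult_self)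

lemma zeta_pow_eq_1_iff:
  assumes "p > 0"
  shows "zeta p ^ m = 1 \<longleftrightarrow> p dvd m"
proof
  assume "zeta p ^ m = 1"
  then have "cis (2 * pi * real (m mod p) / real p) = cis (2 * pi * real 0 / real p)"
    using zeta_pow_mod[OF assms, of m] by (simp add: zeta_pow)
  moreover have "inj_on (\<lambda>k. cis (2 * pi * real k / real p)) {..<p}"
    using bij_betw_roots_unity[OF assms] by (simp add: bij_betw_def)
  ultimately have "m mod p = 0" using inj_onD assms by fastforce
  then show "p dvd m" by auto
qed (auto simp: zeta_pow_mult_self[OF assms])

lemma complex_nth_root_exists:
  assumes "n > 0"
  shows "\<exists>z :: complex. z ^ n = c"
proof (cases "c = 0")
  case True
  then show ?thesis using assms by auto
next
  case False
  obtain f :: "complex \<Rightarrow> complex" where "f ` {z. z ^ n = 1} = {z. z ^ n = c}"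
    using bij_betw_imp_surj_on[OF bij_betw_nth_root_unity[OF False assms]] by blast
  then have "f 1 ^ n = c" by auto
  then show ?thesis ..
qed

lemma proj_class_image_scale:
  "(\<lambda>x k. s k * x k) ` proj_class y = proj_class (\<lambda>k. s k * y k)"
  unfolding proj_class_def
proof (intro equalityI subsetI)
  fix z assume "z \<in> {\<lambda>j. c * (s j * y j) |c. c \<noteq> 0}"
  then obtain c where "c \<noteq> 0" "z = (\<lambda>k. s k * (c * y k))" by (auto simp: algebra_simps)
  then show "z \<in> (\<lambda>x k. s k * x k) ` {\<lambda>j. c * y j |c. c \<noteq> 0}"
    by (intro image_eqI[where x = "\<lambda>j. c * y j"]) auto
qed (auto simp: algebra_simps)

lemma proj_class_scale:
  assumes "c \<noteq> 0"
  shows "proj_class (\<lambda>k. c * y k) = proj_class y"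
  unfolding proj_class_def
proof (intro equalityI subsetI)
  fix z assume "z \<in> {\<lambda>j. e * (c * y j) |e. e \<noteq> 0}"
  then obtain e where "e \<noteq> 0" "z = (\<lambda>j. (e * c) * y j)" by (auto simp: algebra_simps)
  then show "z \<in> {\<lambda>j. e * y j |e. e \<noteq> 0}" using assms by auto
next
  fix z assume "z \<in> {\<lambda>j. e * y j |e. e \<noteq> 0}"
  then obtain e where "e \<noteq> 0" "z = (\<lambda>j. e * y j)" by auto
  then show "z \<in> {\<lambda>j. e * (c * y j) |e. e \<noteq> 0}"
    using assms by (intro CollectI exI[of _ "e / c"]) (auto simp: fun_eq_iff)
qed

lemma proj_class_eqD:
  assumes "proj_class u = proj_class v"
  shows "\<exists>c. c \<noteq> 0 \<and> u = (\<lambda>k. c * v k)"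
proof -
  have "u \<in> proj_class u" unfolding proj_class_def by (auto intro: exI[of _ 1])
  then show ?thesis using assms unfolding proj_class_def by auto
qed

definition diag_map :: "nat \<Rightarrow> nat \<Rightarrow> (nat \<Rightarrow> nat) \<Rightarrow> (nat \<Rightarrow> complex) set \<Rightarrow> (nat \<Rightarrow> complex) set" where
  "diag_map p n a = (\<lambda>P\<in>proj_space n. (\<lambda>x k. zeta p ^ a k * x k) ` P)"

lemma diag_map_proj_class:
  "proj_class y \<in> proj_space n \<Longrightarrow> diag_map p n a (proj_class y) = proj_class (\<lambda>k. zeta p ^ a k * y k)"
  by (simp add: diag_map_def proj_class_image_scale)

lemma diag_map_in_proj_space:
  assumes "P \<in> proj_space n"
  shows "diag_map p n a P \<in> proj_space n"
proof -
  obtain x where x: "P = proj_class x" "\<forall>j. j \<notin> {1..n+1} \<longrightarrow> x j = 0" "\<exists>j\<in>{1..n+1}. x j \<noteq> 0"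
    using assms unfolding proj_space_def by auto
  then have "diag_map p n a P = proj_class (\<lambda>k. zeta p ^ a k * x k)"
    using assms diag_map_proj_class by metis
  moreover have "(\<forall>j. j \<notin> {1..n+1} \<longrightarrow> zeta p ^ a j * x j = 0) \<and> (\<exists>j\<in>{1..n+1}. zeta p ^ a j * x j \<noteq> 0)"
    using x zeta_pow_nonzero by auto
  ultimately show ?thesis unfolding proj_space_def by blast
qed

lemma diag_map_diag_map:
  assumes "P \<in> proj_space n"
  shows "diag_map p n a (diag_map p n b P) = diag_map p n (\<lambda>k. a k + b k) P"
proof -
  obtain x where x: "P = proj_class x" using assms unfolding proj_space_def by auto
  have b: "diag_map p n b P = proj_class (\<lambda>k. zeta p ^ b k * x k)"
    using diag_map_proj_class assms x by metis
  then have "proj_class (\<lambda>k. zeta p ^ b k * x k) \<in> proj_space n"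
    using diag_map_in_proj_space assms by metis
  then show ?thesis
    unfolding b using diag_map_proj_class assms x by (simp add: power_add algebra_simps)
qed

lemma diag_map_cong_scalar:
  assumes "c \<noteq> 0" "\<forall>k\<in>{1..n+1}. zeta p ^ a k = c * zeta p ^ b k"
  shows "diag_map p n a = diag_map p n b"
proof
  fix P
  show "diag_map p n a P = diag_map p n b P"
  proof (cases "P \<in> proj_space n")
    case True
    then obtain x where x: "P = proj_class x" "\<forall>j. j \<notin> {1..n+1} \<longrightarrow> x j = 0"
      unfolding proj_space_def by auto
    have "(\<lambda>k. zeta p ^ a k * x k) = (\<lambda>k. c * (zeta p ^ b k * x k))"
      using assms x by (force simp: fun_eq_iff)
    then show ?thesis using diag_map_proj_class True x proj_class_scale[OF assms(1)] by metis
  qed (simp add: diag_map_def)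
qed

lemma diag_map_multiple_of_p:
  assumes "p > 0" "\<forall>k. p dvd a k"
  shows "diag_map p n a = (\<lambda>P\<in>proj_space n. P)"
proof -
  have "zeta p ^ a k = 1" for k using assms zeta_pow_eq_1_iff by blast
  then show ?thesis unfolding diag_map_def by (intro restrict_ext) simp
qed

lemma minus_one_mult_add_self: "p > 0 \<Longrightarrow> (p - 1) * x + x = p * (x::nat)"
  by (cases p) auto

lemma diag_map_Bij:
  assumes "p > 0"
  shows "diag_map p n a \<in> Bij (proj_space n)"
proof -
  let ?g = "diag_map p n (\<lambda>k. (p - 1) * a k)"
  have pa: "(\<lambda>k. (p - 1) * a k + a k) = (\<lambda>k. p * a k)" "(\<lambda>k. a k + (p - 1) * a k) = (\<lambda>k. p * a k)"
    using minus_one_mult_add_self[OF assms] by (auto simp: add.commute)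
  have id: "diag_map p n (\<lambda>k. p * a k) P = P" if "P \<in> proj_space n" for P
    using diag_map_multiple_of_p[OF assms, of "\<lambda>k. p * a k"] that by simp
  have inv: "?g (diag_map p n a P) = P" "diag_map p n a (?g P) = P" if "P \<in> proj_space n" for P
    unfolding diag_map_diag_map[OF that] pa by (rule id[OF that])+
  have "bij_betw (diag_map p n a) (proj_space n) (proj_space n)"
  proof (rule bij_betw_byWitness[where f' = ?g])
    show "\<forall>P\<in>proj_space n. ?g (diag_map p n a P) = P" using inv(1) by blast
    show "\<forall>P\<in>proj_space n. diag_map p n a (?g P) = P" using inv(2) by blast
  qed (use diag_map_in_proj_space in blast)+
  moreover have "diag_map p n a \<in> extensional (proj_space n)" by (simp add: diag_map_def)
  ultimately show ?thesis by (simp add: Bij_def)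
qed

lemma diag_map_mult:
  assumes "p > 0"
  shows "diag_map p n a \<otimes>\<^bsub>BijGroup (proj_space n)\<^esub> diag_map p n b = diag_map p n (\<lambda>k. a k + b k)"
proof -
  have "compose (proj_space n) (diag_map p n a) (diag_map p n b) = diag_map p n (\<lambda>k. a k + b k)"
    by (rule ext) (simp add: compose_def diag_map_diag_map, simp add: diag_map_def)
  then show ?thesis using diag_map_Bij[OF assms] by (simp add: BijGroup_def)
qed

lemma diag_map_eq_one:
  assumes "p > 0" "\<forall>k. p dvd a k"
  shows "diag_map p n a = \<one>\<^bsub>BijGroup (proj_space n)\<^esub>"
  using diag_map_multiple_of_p[OF assms] by (simp add: BijGroup_def)

lemma diag_map_inv:
  assumes "p > 0"
  shows "inv\<^bsub>BijGroup (proj_space n)\<^esub> diag_map p n a = diag_map p n (\<lambda>k. (p - 1) * a k)"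
proof (rule group.inv_equality[OF group_BijGroup])
  have "(\<lambda>k. (p - 1) * a k + a k) = (\<lambda>k. p * a k)"
    using minus_one_mult_add_self[OF assms] by auto
  then show "diag_map p n (\<lambda>k. (p - 1) * a k) \<otimes>\<^bsub>BijGroup (proj_space n)\<^esub> diag_map p n a
      = \<one>\<^bsub>BijGroup (proj_space n)\<^esub>"
    by (simp add: diag_map_mult[OF assms] diag_map_eq_one[OF assms])
qed (auto simp: BijGroup_def diag_map_Bij[OF assms])

lemma phi_eq_diag_map: "phi p n j = diag_map p n (\<lambda>k. if k = j then 1 else 0)"
  unfolding phi_def diag_map_def by (intro restrict_ext image_cong refl ext) auto

lemma H0_subset_range_diag_map:
  assumes "p > 0"
  shows "H0 p n \<subseteq> range (diag_map p n)"
proof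
  fix g assume "g \<in> H0 p n"
  then show "g \<in> range (diag_map p n)" unfolding H0_def
  proof (induction rule: generate.induct)
    case one
    then show ?case using diag_map_eq_one[OF assms, of "\<lambda>k. 0"] by (metis dvd_0_right rangeI)
  qed (auto simp: phi_eq_diag_map diag_map_inv[OF assms] diag_map_mult[OF assms])
qed

text \<open>Exponents matter modulo \<open>p\<close> and up to a common shift, which normalises \<open>a (n+1)\<close> to \<open>0\<close>.\<close>

lemma range_diag_map_eq_normalised:
  assumes "p > 0"
  shows "range (diag_map p n) =
    (\<lambda>a. diag_map p n (\<lambda>k. if k \<in> {1..n} then a k else 0)) ` (\<Pi>\<^sub>E k\<in>{1..n}. {0..<p})"
proof (intro equalityI subsetI)
  fix f assume "f \<in> range (diag_map p n)"
  then obtain a where f: "f = diag_map p n a" by auto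
  define a' where "a' = (\<lambda>k\<in>{1..n}. (a k + (p - 1) * a (n + 1)) mod p)"
  have "zeta p ^ (if k \<in> {1..n} then a' k else 0) = zeta p ^ ((p - 1) * a (n + 1)) * zeta p ^ a k"
    if "k \<in> {1..n+1}" for k
  proof (cases "k \<in> {1..n}")
    case True
    then show ?thesis using zeta_pow_mod[OF assms, of "a k + (p - 1) * a (n + 1)"]
      by (simp add: a'_def power_add mult.commute)
  next
    case False
    then have "k = n + 1" using that by auto
    moreover have "(p - 1) * a (n + 1) + a (n + 1) = p * a (n + 1)"
      by (rule minus_one_mult_add_self[OF assms])
    ultimately show ?thesis using False zeta_pow_mult_self[OF assms, of "a (n + 1)"]
      by (simp add: power_add[symmetric])
  qed
  then have "diag_map p n (\<lambda>k. if k \<in> {1..n} then a' k else 0) = f"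
    unfolding f by (intro diag_map_cong_scalar[OF zeta_pow_nonzero]) blast
  moreover have "a' \<in> (\<Pi>\<^sub>E k\<in>{1..n}. {0..<p})" using assms by (simp add: a'_def)
  ultimately show "f \<in> (\<lambda>a. diag_map p n (\<lambda>k. if k \<in> {1..n} then a k else 0)) ` (\<Pi>\<^sub>E k\<in>{1..n}. {0..<p})"
    by blast
qed auto

lemma finite_range_diag_map: "p > 0 \<Longrightarrow> finite (range (diag_map p n))"
  by (simp add: range_diag_map_eq_normalised finite_PiE)

lemma card_range_diag_map_le:
  assumes "p > 0"
  shows "card (range (diag_map p n)) \<le> p ^ n"
proof -
  have "card (range (diag_map p n)) \<le> card (\<Pi>\<^sub>E k\<in>{1..n}. {0..<p})"
    unfolding range_diag_map_eq_normalised[OF assms] by (rule card_image_le) (simp add: finite_PiE)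
  also have "\<dots> = p ^ n" by (simp add: card_PiE)
  finally show ?thesis .
qed

lemma diag_map_fixes_proj_class:
  assumes "proj_class x \<in> proj_space n" "\<forall>k. x k \<noteq> 0 \<longrightarrow> a k = 0"
  shows "diag_map p n a (proj_class x) = proj_class x"
proof -
  have "(\<lambda>k. zeta p ^ a k * x k) = x" using assms(2) by (force simp: fun_eq_iff)
  then show ?thesis using diag_map_proj_class[OF assms(1)] by simp
qed

lemma diag_map_neq_one:
  assumes "p > 0" "i \<in> {1..n+1}" "m \<in> {1..n+1}" "i \<noteq> m" "\<not> p dvd a i" "a m = 0"
  shows "diag_map p n a \<noteq> \<one>\<^bsub>BijGroup (proj_space n)\<^esub>"
proof
  assume one: "diag_map p n a = \<one>\<^bsub>BijGroup (proj_space n)\<^esub>"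
  define x where "x = (\<lambda>k. if k = i \<or> k = m then (1::complex) else 0)"
  have P: "proj_class x \<in> proj_space n"
    using assms unfolding proj_space_def x_def by force
  then have "diag_map p n a (proj_class x) = proj_class x"
    using one by (simp add: BijGroup_def)
  then have "proj_class (\<lambda>k. zeta p ^ a k * x k) = proj_class x"
    using diag_map_proj_class[OF P] by simp
  then obtain c where c: "(\<lambda>k. zeta p ^ a k * x k) = (\<lambda>k. c * x k)"
    using proj_class_eqD by blast
  from fun_cong[OF c, of m] fun_cong[OF c, of i] have "zeta p ^ a i = 1"
    using assms by (simp add: x_def)
  then show False using zeta_pow_eq_1_iff assms by blast
qed

lemma two_linear_forms_common_zero:
  "\<exists>z1 z2 z3 :: complex. (z1 \<noteq> 0 \<or> z2 \<noteq> 0 \<or> z3 \<noteq> 0) \<and>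
     a1 * z1 + a2 * z2 + a3 * z3 = 0 \<and> b1 * z1 + b2 * z2 + b3 * z3 = 0"
proof -
  consider "a2*b3 - a3*b2 \<noteq> 0 \<or> a3*b1 - a1*b3 \<noteq> 0 \<or> a1*b2 - a2*b1 \<noteq> 0"
    | "a2*b3 - a3*b2 = 0" "a3*b1 - a1*b3 = 0" "a1*b2 - a2*b1 = 0" "a1 \<noteq> 0 \<or> a2 \<noteq> 0"
    | "a2*b3 - a3*b2 = 0" "a3*b1 - a1*b3 = 0" "a1*b2 - a2*b1 = 0" "a1 = 0" "a2 = 0" "b1 \<noteq> 0 \<or> b2 \<noteq> 0"
    | "a1 = 0" "a2 = 0" "b1 = 0" "b2 = 0"
    by blast
  then show ?thesis
  proof cases
    case 1
    then show ?thesis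
      by (intro exI[of _ "a2*b3 - a3*b2"] exI[of _ "a3*b1 - a1*b3"] exI[of _ "a1*b2 - a2*b1"])
        (auto simp: algebra_simps)
  next
    case 2
    then show ?thesis by (intro exI[of _ "a2"] exI[of _ "-a1"] exI[of _ "0"]) (auto simp: algebra_simps)
  next
    case 3
    then show ?thesis by (intro exI[of _ "b2"] exI[of _ "-b1"] exI[of _ "0"]) (auto simp: algebra_simps)
  next
    case 4
    then show ?thesis by (intro exI[of _ "1"] exI[of _ "0"] exI[of _ "0"]) auto
  qed
qed

text \<open>
  In the coordinates \<open>y\<^sub>k = x\<^sub>k\<^sup>p\<close> the equations of \<open>M\<close> are linear and express \<open>y\<^sub>d\<^sub>+\<^sub>2, \<dots>, y\<^sub>n\<^sub>+\<^sub>1\<close>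
  in terms of the free coordinates \<open>y\<^sub>1, \<dots>, y\<^sub>d\<^sub>+\<^sub>1\<close>; two further linear conditions can be met by
  a nonzero choice of \<open>y\<^sub>1, y\<^sub>2, y\<^sub>3\<close>.
\<close>

lemma M_var_meets_coordinate_planes:
  assumes "d \<ge> 2" "n \<ge> d + 1" "p > 0" "i \<in> {1..n+1}" "j \<in> {1..n+1}"
  obtains x where "proj_class x \<in> M_var p n d Lam" "x i = 0" "x j = 0"
proof -
  define L where "L q z = (\<Sum>t\<in>{1..d}. lam_ext Lam q t * z t) + z (d + 1)" for q and z :: "nat \<Rightarrow> complex"
  define V where "V k z = (if k \<le> d + 1 then z k else L (k - d - 2) z)" for k z
  define E where "E s = (\<lambda>t::nat. if t = s then (1::complex) else 0)" for s :: nat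
  have V_lin: "V k (\<lambda>t. z1 * E 1 t + z2 * E 2 t + z3 * E 3 t) = z1 * V k (E 1) + z2 * V k (E 2) + z3 * V k (E 3)"
    for k z1 z2 z3
    unfolding V_def L_def by (auto simp: sum.distrib sum_distrib_left algebra_simps)
  obtain z1 z2 z3 where zz: "z1 \<noteq> 0 \<or> z2 \<noteq> 0 \<or> z3 \<noteq> 0"
    "V i (E 1) * z1 + V i (E 2) * z2 + V i (E 3) * z3 = 0"
    "V j (E 1) * z1 + V j (E 2) * z2 + V j (E 3) * z3 = 0"
    using two_linear_forms_common_zero by blast
  define z where "z = (\<lambda>t. z1 * E 1 t + z2 * E 2 t + z3 * E 3 t)"
  have Vz: "V i z = 0" "V j z = 0" using zz V_lin unfolding z_def by (auto simp: algebra_simps)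
  define y where "y k = (if k \<in> {1..d+1} then z k else if k \<in> {d+2..n+1} then - L (k - d - 2) z else 0)" for k
  obtain x where xp: "\<And>k. x k ^ p = y k"
    using choice[OF allI[OF complex_nth_root_exists[OF assms(3)]]] by blast
  have x0: "x k = 0 \<longleftrightarrow> y k = 0" for k
    using xp[of k] assms(3) by (metis power_0_left power_eq_0_iff zero_less_iff_neq_zero)
  have "y k = 0" if "k \<in> {1..n+1}" "V k z = 0" for k
    using that unfolding y_def V_def by (cases "k \<le> d + 1") auto
  then have xij: "x i = 0" "x j = 0" using Vz assms(4,5) x0 by auto
  have "y 1 = z1" "y 2 = z2" "y 3 = z3" using assms(1) by (auto simp: y_def z_def E_def)
  then have "\<exists>k\<in>{1..n+1}. x k \<noteq> 0" using zz(1) x0 assms(1,2) by force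
  moreover have "\<forall>k. k \<notin> {1..n+1} \<longrightarrow> x k = 0" using x0 assms(2) by (auto simp: y_def)
  ultimately have P: "proj_class x \<in> proj_space n" unfolding proj_space_def by blast
  have y_eq: "(\<Sum>t\<in>{1..d}. lam_ext Lam q t * y t) + y (d + 1) + y (d + 2 + q) = 0"
    if "q \<in> {0..n-d-1}" for q
  proof -
    have "(\<Sum>t\<in>{1..d}. lam_ext Lam q t * y t) = (\<Sum>t\<in>{1..d}. lam_ext Lam q t * z t)"
      by (rule sum.cong) (auto simp: y_def)
    moreover have "y (d + 2 + q) = - L q z" using that assms(2) by (simp add: y_def)
    ultimately show ?thesis by (simp add: L_def y_def)
  qed
  have "fermat_poly p d Lam q (\<lambda>k. c * x k) = 0" if "q \<in> {0..n-d-1}" for q c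
  proof -
    have "fermat_poly p d Lam q (\<lambda>k. c * x k)
        = c ^ p * ((\<Sum>t\<in>{1..d}. lam_ext Lam q t * y t) + y (d + 1) + y (d + 2 + q))"
      unfolding fermat_poly_def by (simp add: power_mult_distrib xp sum_distrib_left algebra_simps)
    then show ?thesis using y_eq[OF that] by simp
  qed
  then have "proj_class x \<in> M_var p n d Lam"
    using P unfolding M_var_def proj_class_def by auto
  then show ?thesis using that xij by blast
qed

definition acts_freely_on :: "('a \<Rightarrow> 'a, 'b) monoid_scheme \<Rightarrow> ('a \<Rightarrow> 'a) set \<Rightarrow> 'a set \<Rightarrow> bool" where
  "acts_freely_on G K M \<longleftrightarrow> (\<forall>g\<in>K. g \<noteq> \<one>\<^bsub>G\<^esub> \<longrightarrow> (\<forall>P\<in>M. g P \<noteq> P))"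

lemma diag_map_two_coords_notin_free_subgroup:
  assumes "d \<ge> 2" "n \<ge> d + 1" "p > 0"
    and free: "acts_freely_on (BijGroup (proj_space n)) K (M_var p n d Lam)"
    and ij: "i \<in> {1..n+1}" "j \<in> {1..n+1}"
    and supp: "\<forall>k. k \<noteq> i \<and> k \<noteq> j \<longrightarrow> c k = 0" and "\<not> p dvd c i"
  shows "diag_map p n c \<notin> K"
proof
  assume "diag_map p n c \<in> K"
  have "\<exists>m\<in>{1::nat, 2, 3}. m \<noteq> i \<and> m \<noteq> j" by auto
  then obtain m where m: "m \<in> {1::nat, 2, 3}" "m \<noteq> i" "m \<noteq> j" by blast
  then have "m \<in> {1..n+1}" using assms(1,2) by auto
  have "diag_map p n c \<noteq> \<one>\<^bsub>BijGroup (proj_space n)\<^esub>"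
    using diag_map_neq_one[OF assms(3) ij(1) \<open>m \<in> {1..n+1}\<close>] m supp assms(8) by auto
  moreover obtain x where x: "proj_class x \<in> M_var p n d Lam" "x i = 0" "x j = 0"
    using M_var_meets_coordinate_planes[OF assms(1-3) ij] by blast
  moreover have "diag_map p n c (proj_class x) = proj_class x"
    using x supp by (intro diag_map_fixes_proj_class) (auto simp: M_var_def)
  ultimately show False using free \<open>diag_map p n c \<in> K\<close> unfolding acts_freely_on_def by blast
qed

lemma not_dvd_minus_one_mult_add:
  assumes "a < p" "b < p" "a \<noteq> b"
  shows "\<not> p dvd ((p - 1) * b + (a::nat))"
proof
  assume "p dvd ((p - 1) * b + a)"
  then have "((p - 1) * b + a + b) mod p = b"
    using assms(2) by (metis add.left_neutral dvd_imp_mod_0 mod_add_left_eq mod_less)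
  moreover have "((p - 1) * b + a + b) mod p = a"
  proof -
    have "(p - 1) * b + a + b = a + p * b"
      using minus_one_mult_add_self[of p b] assms by simp
    then show ?thesis unfolding \<open>(p - 1) * b + a + b = a + p * b\<close> using assms(1) by simp
  qed
  ultimately show False using assms(3) by simp
qed

lemma (in group) card_translates_of_subgroup:
  assumes "subgroup K G" "finite T" "K \<subseteq> T" "f ` I \<subseteq> carrier G"
    and "\<And>i k. i \<in> I \<Longrightarrow> k \<in> K \<Longrightarrow> f i \<otimes> k \<in> T"
    and "\<And>i. i \<in> I \<Longrightarrow> f i \<notin> K"
    and "\<And>i j. i \<in> I \<Longrightarrow> j \<in> I \<Longrightarrow> i \<noteq> j \<Longrightarrow> inv (f j) \<otimes> f i \<notin> K"
  shows "(card I + 1) * card K \<le> card T"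
proof -
  interpret K: subgroup K G by (rule assms(1))
  define \<Phi> where "\<Phi> t = f (fst t) \<otimes> snd t" for t
  have inj: "inj_on \<Phi> (I \<times> K)"
  proof (rule inj_onI, clarify)
    fix i k j k' assume i: "i \<in> I" "k \<in> K" and j: "j \<in> I" "k' \<in> K" and e: "\<Phi> (i, k) = \<Phi> (j, k')"
    have fi: "f i \<in> carrier G" "f j \<in> carrier G" using assms(4) i j by auto
    have "inv (f j) \<otimes> f i = k' \<otimes> inv k"
      using e fi i j by (simp add: \<Phi>_def inv_solve_left inv_solve_right m_assoc)
    then have "i = j" using assms(7) i j by force
    then show "i = j \<and> k = k'" using e fi i j by (simp add: \<Phi>_def)
  qed
  have "f i \<otimes> k \<notin> K" if "i \<in> I" "k \<in> K" for i k
  proof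
    assume "f i \<otimes> k \<in> K"
    moreover have "f i = (f i \<otimes> k) \<otimes> inv k"
      using that assms(4) K.mem_carrier by (simp add: image_subset_iff m_assoc)
    ultimately have "f i \<in> K" using that by (metis K.m_closed K.m_inv_closed)
    then show False using assms(6) that by blast
  qed
  then have disj: "\<Phi> ` (I \<times> K) \<inter> K = {}" by (auto simp: \<Phi>_def)
  have img: "\<Phi> ` (I \<times> K) \<subseteq> T" using assms(5) by (auto simp: \<Phi>_def)
  then have "finite (\<Phi> ` (I \<times> K))" using assms(2) finite_subset by blast
  then have "card (I \<times> K) + card K = card (\<Phi> ` (I \<times> K) \<union> K)"
    using card_image[OF inj] card_Un_disjoint disj finite_subset[OF assms(3,2)] by metis
  also have "\<dots> \<le> card T" using img assms(2,3) by (intro card_mono) auto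
  finally show ?thesis by (simp add: card_cartesian_product algebra_simps)
qed

lemma free_subgroup_of_H0_card_bound:
  assumes "d \<ge> 2" "n \<ge> d + 1" "p > 0"
    and "subgroup K (BijGroup (proj_space n))" "K \<subseteq> H0 p n"
    and free: "acts_freely_on (BijGroup (proj_space n)) K (M_var p n d Lam)"
  shows "((n + 1) * (p - 1) + 1) * card K \<le> p ^ n"
proof -
  let ?B = "BijGroup (proj_space n)"
  let ?I = "{1..n+1} \<times> {1..<p}"
  interpret B: group ?B by (rule group_BijGroup)
  define u where "u = (\<lambda>(i, a). diag_map p n (\<lambda>k. if k = i then a else 0))"
  have K_diag: "K \<subseteq> range (diag_map p n)"
    using H0_subset_range_diag_map[OF assms(3)] assms(5) by blast
  have notK: "diag_map p n c \<notin> K"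
    if "i \<in> {1..n+1}" "j \<in> {1..n+1}" "\<forall>k. k \<noteq> i \<and> k \<noteq> j \<longrightarrow> c k = 0" "\<not> p dvd c i" for i j c
    by (rule diag_map_two_coords_notin_free_subgroup[OF assms(1-3) free that])
  have "(card ?I + 1) * card K \<le> card (range (diag_map p n))"
  proof (rule B.card_translates_of_subgroup[OF assms(4) finite_range_diag_map[OF assms(3)] K_diag])
    show "u ` ?I \<subseteq> carrier ?B"
      by (auto simp: u_def BijGroup_def diag_map_Bij[OF assms(3)])
    show "u t \<otimes>\<^bsub>?B\<^esub> k \<in> range (diag_map p n)" if k: "k \<in> K" for t k
    proof -
      obtain c where "k = diag_map p n c" using k K_diag by blast
      moreover obtain i a where "t = (i, a)" by fastforce
      ultimately show ?thesis by (simp add: u_def diag_map_mult[OF assms(3)])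
    qed
    show "u t \<notin> K" if t_in: "t \<in> ?I" for t
    proof -
      obtain i a where t: "t = (i, a)" "i \<in> {1..n+1}" "a \<in> {1..<p}" using t_in by blast
      then have "\<not> p dvd a" by (auto dest: dvd_imp_le)
      then show ?thesis unfolding u_def t(1) prod.case using t(2) by (intro notK[of i i]) auto
    qed
    show "inv\<^bsub>?B\<^esub> u s \<otimes>\<^bsub>?B\<^esub> u t \<notin> K" if ts: "t \<in> ?I" "s \<in> ?I" "t \<noteq> s" for t s
    proof -
      obtain i a where t: "t = (i, a)" "i \<in> {1..n+1}" "a \<in> {1..<p}" using ts(1) by blast
      obtain j b where s: "s = (j, b)" "j \<in> {1..n+1}" "b \<in> {1..<p}" using ts(2) by blast
      have ndvd: "\<not> p dvd (p - 1) * (if i = j then b else 0) + a"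
      proof (cases "i = j")
        case True
        then have "a \<noteq> b" using ts(3) s(1) t(1) by simp
        then show ?thesis using True s t not_dvd_minus_one_mult_add[of a p b] by simp
      next
        case False
        then show ?thesis using t by (auto dest: dvd_imp_le)
      qed
      have eq: "inv\<^bsub>?B\<^esub> u s \<otimes>\<^bsub>?B\<^esub> u t
          = diag_map p n (\<lambda>k. (p - 1) * (if k = j then b else 0) + (if k = i then a else 0))"
        unfolding s(1) t(1) u_def prod.case diag_map_inv[OF assms(3)] diag_map_mult[OF assms(3)] by simp
      show ?thesis
        unfolding eq by (rule notK[OF t(2) s(2)]) (use ndvd in simp_all)
    qed
  qed
  then show ?thesis
    using card_range_diag_map_le[OF assms(3), of n] by (simp add: algebra_simps)
qed

lemma card_iso_power_integer_mod_group:
  "G \<cong> product_group {..<m} (\<lambda>_. integer_mod_group p) \<Longrightarrow> p > 0 \<Longrightarrow> card (carrier G) = p ^ m"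
  by (simp add: iso_same_card carrier_integer_mod_group card_PiE)

lemma geometric_bound_consequences:
  assumes "(n + 1) * (p - 1) + 1 \<le> p ^ r" "p \<ge> 2" "n \<ge> 3"
  shows "real (n + 1) \<le> (real p ^ r - 1) / (real p - 1) \<and> r \<noteq> 1 \<and> (p = 2 \<longrightarrow> r \<noteq> 2)"
proof (intro conjI)
  have "real (p - 1) = real p - 1" using assms(2) by (simp add: of_nat_diff)
  then have "real ((n + 1) * (p - 1) + 1) = real (n + 1) * (real p - 1) + 1"
    by (simp only: of_nat_add of_nat_mult of_nat_1)
  moreover have "real ((n + 1) * (p - 1) + 1) \<le> real (p ^ r)"
    using assms(1) by (simp only: of_nat_le_iff)
  ultimately have "real (n + 1) * (real p - 1) + 1 \<le> real p ^ r" by simp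
  then show "real (n + 1) \<le> (real p ^ r - 1) / (real p - 1)"
    using assms(2) by (simp add: pos_le_divide_eq)
  show "r \<noteq> 1"
  proof
    assume "r = 1"
    moreover have "(n + 1) * (p - 1) \<ge> 2 * (p - 1)" using assms(3) by (intro mult_le_mono1) simp
    ultimately show False using assms(1,2) by simp
  qed
  show "p = 2 \<longrightarrow> r \<noteq> 2" using assms(1,3) by auto
qed

theorem mainTheorem5:
  fixes d n p r :: nat
    and Lam :: "nat \<Rightarrow> nat \<Rightarrow> complex"
    and K :: "((nat \<Rightarrow> complex) set \<Rightarrow> (nat \<Rightarrow> complex) set) set"
  assumes "d \<ge> 2" and "n \<ge> d + 1" and "Factorial_Ring.prime p"
    and "Lam \<in> X_nd n d"
    and "r \<le> n"
    and "subgroup K (BijGroup (proj_space n))" and "K \<subseteq> H0 p n"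
    and "(BijGroup (proj_space n))\<lparr>carrier := K\<rparr> \<cong>
           product_group {..<n - r} (\<lambda>_. integer_mod_group p)"
    and "\<forall>g\<in>K. g \<noteq> \<one>\<^bsub>BijGroup (proj_space n)\<^esub> \<longrightarrow>
           (\<forall>P\<in>M_var p n d Lam. g P \<noteq> P)"
  shows "real (n + 1) \<le> (real p ^ r - 1) / (real p - 1) \<and> r \<noteq> 1 \<and> (p = 2 \<longrightarrow> r \<noteq> 2)"
proof -
  have p: "p \<ge> 2" using assms(3) prime_ge_2_nat by blast
  have "card K = p ^ (n - r)"
    using card_iso_power_integer_mod_group[OF assms(8)] p by simp
  then have "((n + 1) * (p - 1) + 1) * p ^ (n - r) \<le> p ^ r * p ^ (n - r)"
    using free_subgroup_of_H0_card_bound[OF assms(1,2) _ assms(6,7) assms(9)[folded acts_freely_on_def]]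
      p assms(5)
    by (simp add: power_add[symmetric])
  then have "(n + 1) * (p - 1) + 1 \<le> p ^ r" using p by simp
  then show ?thesis using geometric_bound_consequences p assms(1,2) by simp
qed

end
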